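(* There exist subspaces $\mathcal C$ of a bipartite space $\mathcal H=\mathcal H_A\otimes\mathcal H_B$ for which $N_B(\mathcal C)\subsetneq ST_B(\mathcal C)$.
   Context: A mixed state $\rho'$ is "in" $\mathcal C$ if $\mathrm{Tr}(P_{\mathcal C}\rho')=1$, where $P_{\mathcal C}$ is the projector onto $\mathcal C$. $N_B(\mathcal C)=\{\rho:\exists\rho'\text{ in }\mathcal C,\ \exists\mathcal O\text{ a super-operator acting only on }\mathcal H_B,\ \rho=\mathcal O(\rho')\}$. $ST_B(\mathcal C)=\{\rho:\exists\rho'\text{ in }\mathcal C,\ \mathrm{Tr}_B(\rho)=\mathrm{Tr}_B(\rho')\}$. *)

theory Defs
  imports Complex_Main "Jordan_Normal_Form.Matrix"
begin

text \<open>Finite-dimensional bipartite space H = H_A (x) H_B with dim H_A = dA, dim H_B = dB.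
  Operators on H are complex (dA*dB) x (dA*dB) matrices; the basis vector |a>|b>
  (a < dA, b < dB) has index a * dB + b.\<close>

definition mtrace :: "complex mat \<Rightarrow> complex" where
  "mtrace M = (\<Sum>i<dim_row M. M $$ (i, i))"

definition adj :: "complex mat \<Rightarrow> complex mat" where
  "adj M = mat (dim_col M) (dim_row M) (\<lambda>(i, j). cnj (M $$ (j, i)))"

definition psd :: "nat \<Rightarrow> complex mat \<Rightarrow> bool" where
  "psd n M \<longleftrightarrow> M \<in> carrier_mat n n \<and> adj M = M \<and>
     (\<forall>v. dim_vec v = n \<longrightarrow> 0 \<le> Re (conjugate v \<bullet> (M *\<^sub>v v)))"

definition density :: "nat \<Rightarrow> complex mat \<Rightarrow> bool" where
  "density n \<rho> \<longleftrightarrow> psd n \<rho> \<and> mtrace \<rho> = 1"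

text \<open>Orthogonal projectors on an n-dimensional space; a subspace C is represented
  by its projector P_C (every subspace has exactly one such projector).\<close>
definition projector :: "nat \<Rightarrow> complex mat \<Rightarrow> bool" where
  "projector n P \<longleftrightarrow> P \<in> carrier_mat n n \<and> adj P = P \<and> P * P = P"

definition state_in :: "nat \<Rightarrow> complex mat \<Rightarrow> complex mat \<Rightarrow> bool" where
  "state_in n P \<rho> \<longleftrightarrow> density n \<rho> \<and> mtrace (P * \<rho>) = 1"

definition id_tensor :: "nat \<Rightarrow> nat \<Rightarrow> complex mat \<Rightarrow> complex mat" where
  "id_tensor dA dB K = mat (dA * dB) (dA * dB)
     (\<lambda>(i, j). if i div dB = j div dB then K $$ (i mod dB, j mod dB) else 0)"

text \<open>Super-operator (CPTP map) on H_B, given in operator-sum (Kraus) form by a finite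
  list of Kraus operators Ks with sum K^dagger K = I; applied to H as id_A (x) O.\<close>
definition kraus_B :: "nat \<Rightarrow> complex mat list \<Rightarrow> bool" where
  "kraus_B dB Ks \<longleftrightarrow> (\<forall>K\<in>set Ks. K \<in> carrier_mat dB dB) \<and>
     foldr (\<lambda>K S. adj K * K + S) Ks (0\<^sub>m dB dB) = 1\<^sub>m dB"

definition apply_B :: "nat \<Rightarrow> nat \<Rightarrow> complex mat list \<Rightarrow> complex mat \<Rightarrow> complex mat" where
  "apply_B dA dB Ks \<rho> = foldr (\<lambda>K S. id_tensor dA dB K * \<rho> * adj (id_tensor dA dB K) + S) Ks
                         (0\<^sub>m (dA * dB) (dA * dB))"

definition ptrace_B :: "nat \<Rightarrow> nat \<Rightarrow> complex mat \<Rightarrow> complex mat" where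
  "ptrace_B dA dB \<rho> = mat dA dA (\<lambda>(a, a'). \<Sum>b<dB. \<rho> $$ (a * dB + b, a' * dB + b))"

definition N_B :: "nat \<Rightarrow> nat \<Rightarrow> complex mat \<Rightarrow> complex mat set" where
  "N_B dA dB P = {\<rho>. density (dA * dB) \<rho> \<and> (\<exists>\<rho>' Ks. state_in (dA * dB) P \<rho>' \<and> kraus_B dB Ks \<and>
                         \<rho> = apply_B dA dB Ks \<rho>')}"

definition ST_B :: "nat \<Rightarrow> nat \<Rightarrow> complex mat \<Rightarrow> complex mat set" where
  "ST_B dA dB P = {\<rho>. density (dA * dB) \<rho> \<and> (\<exists>\<rho>'. state_in (dA * dB) P \<rho>' \<and>
                         ptrace_B dA dB \<rho> = ptrace_B dA dB \<rho>')}"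

end

theory Submission
  imports Defs
begin

text \<open>Take \<open>C = H\<^sub>A \<otimes> |0\<rangle>\<close>. Its states are \<open>\<sigma> \<otimes> |0\<rangle>\<langle>0|\<close> (a positive
  semidefinite matrix with vanishing diagonal entry vanishes in that row and column), so a
  channel acting on \<open>B\<close> turns them into product states \<open>\<sigma> \<otimes> \<tau>\<close>. The inclusion
  \<open>N\<^sub>B(C) \<subseteq> ST\<^sub>B(C)\<close> holds for every subspace, because a trace-preserving map on \<open>B\<close>
  does not change the partial trace over \<open>B\<close>. For \<open>d\<^sub>A = d\<^sub>B = 2\<close>, the Bell state has
  reduced state \<open>I/2\<close> on \<open>A\<close>, like \<open>I/2 \<otimes> |0\<rangle>\<langle>0|\<close>, so it lies in \<open>ST\<^sub>B(C)\<close>; being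
  entangled, it is not in \<open>N\<^sub>B(C)\<close>.\<close>

lemma block_index_less:
  fixes a b dA dB :: nat
  assumes "a < dA" "b < dB"
  shows "a * dB + b < dA * dB"
proof -
  have "a * dB + b < Suc a * dB" using assms(2) by simp
  also have "\<dots> \<le> dA * dB" using assms(1) by (metis Suc_leI mult_le_mono1)
  finally show ?thesis .
qed

lemma sum_list_sum_swap: "(\<Sum>x\<leftarrow>xs. \<Sum>y\<in>A. f x y) = (\<Sum>y\<in>A. \<Sum>x\<leftarrow>xs. f x y)"
  by (induction xs) (simp_all add: sum.distrib)

lemma sum_rotate:
  "(\<Sum>a\<in>A. \<Sum>b\<in>B. \<Sum>c\<in>C. f a b c) = (\<Sum>b\<in>B. \<Sum>c\<in>C. \<Sum>a\<in>A. f a b c)"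
  by (subst sum.swap) (simp add: sum.swap[of _ A])

lemma sum_same_block:
  fixes dA dB :: nat
  assumes "i < dA * dB"
  shows "(\<Sum>k<dA * dB. if k div dB = i div dB then f k else 0) = (\<Sum>c<dB. f (i div dB * dB + c))"
proof -
  have "0 < dB" "i div dB < dA"
    using assms by (auto simp: less_mult_imp_div_less intro: gr0I)
  then have block: "{k \<in> {..<dA * dB}. k div dB = i div dB} = (\<lambda>c. i div dB * dB + c) ` {..<dB}"
  proof (intro equalityI subsetI)
    fix k assume "k \<in> {k \<in> {..<dA * dB}. k div dB = i div dB}"
    then show "k \<in> (\<lambda>c. i div dB * dB + c) ` {..<dB}"
      using \<open>0 < dB\<close> by (auto simp: image_iff intro!: bexI[of _ "k mod dB"]) (metis div_mult_mod_eq)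
  qed (auto simp: block_index_less)
  have "(\<Sum>k<dA * dB. if k div dB = i div dB then f k else 0) = sum f ((\<lambda>c. i div dB * dB + c) ` {..<dB})"
    unfolding block[symmetric] by (rule sum.inter_filter[symmetric]) simp
  also have "\<dots> = (\<Sum>c<dB. f (i div dB * dB + c))"
    by (simp add: sum.reindex)
  finally show ?thesis .
qed

lemma foldr_add_mat_carrier_index:
  assumes "\<And>x. x \<in> set xs \<Longrightarrow> f x \<in> carrier_mat n n"
  shows "foldr (\<lambda>x S. f x + S) xs (0\<^sub>m n n) \<in> carrier_mat n n"
    and "i < n \<Longrightarrow> j < n \<Longrightarrow> foldr (\<lambda>x S. f x + S) xs (0\<^sub>m n n) $$ (i, j) = (\<Sum>x\<leftarrow>xs. f x $$ (i, j))"
  using assms by (induction xs) auto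

lemma adj_carrier_mat: "K \<in> carrier_mat m n \<Longrightarrow> adj K \<in> carrier_mat n m"
  unfolding adj_def by auto

lemma quadratic_form_sum:
  assumes "M \<in> carrier_mat n n" "dim_vec v = n"
  shows "conjugate v \<bullet> (M *\<^sub>v v) = (\<Sum>i<n. cnj (v $ i) * (\<Sum>j<n. M $$ (i, j) * v $ j))"
  using assms by (auto simp: scalar_prod_def row_def atLeast0LessThan intro!: sum.cong)

lemma psd_hermitian:
  assumes "psd n M" "i < n" "j < n"
  shows "M $$ (j, i) = cnj (M $$ (i, j))"
proof -
  have "M \<in> carrier_mat n n" "adj M = M"
    using assms(1) by (auto simp: psd_def)
  then show ?thesis
    using assms(2,3) by (metis adj_def carrier_matD index_mat(1) case_prod_conv)
qed

lemma psd_diag_nonneg: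
  assumes "psd n M" "i < n"
  shows "0 \<le> M $$ (i, i)"
proof -
  have M: "M \<in> carrier_mat n n"
    using assms(1) by (simp add: psd_def)
  have "conjugate (unit_vec n i) \<bullet> (M *\<^sub>v unit_vec n i) = M $$ (i, i)"
    using assms(2)
    by (simp add: quadratic_form_sum[OF M] unit_vec_def if_distrib[of cnj] if_distrib[of "(*) _"]
        if_distrib[of "\<lambda>x. x * _"] cong: if_cong)
  then have "0 \<le> Re (M $$ (i, i))"
    using assms(1) by (metis dim_vec psd_def unit_vec_def)
  moreover have "Im (M $$ (i, i)) = 0"
    using psd_hermitian[OF assms(1,2,2)] by (simp add: complex_eq_iff)
  ultimately show ?thesis
    by (simp add: less_eq_complex_def)
qed

lemma psd_pair_form:
  assumes "psd n M" "i < n" "j < n" "i \<noteq> j"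
  shows "0 \<le> Re (cnj s * s * M $$ (i, i) + cnj s * M $$ (i, j) + M $$ (j, i) * s + M $$ (j, j))"
proof -
  define v where "v = vec n (\<lambda>k. if k = i then s else if k = j then 1 else 0)"
  have M: "M \<in> carrier_mat n n" and v: "dim_vec v = n"
    using assms(1) by (auto simp: psd_def v_def)
  have Mv: "(\<Sum>l<n. M $$ (k, l) * v $ l) = M $$ (k, i) * s + M $$ (k, j)" if "k < n" for k
  proof -
    have "(\<Sum>l<n. M $$ (k, l) * v $ l) =
        (\<Sum>l<n. (if l = i then M $$ (k, i) * s else 0) + (if l = j then M $$ (k, j) else 0))"
      using assms by (auto simp: v_def intro!: sum.cong)
    then show ?thesis
      using assms by (simp add: sum.distrib)
  qed
  have "conjugate v \<bullet> (M *\<^sub>v v) = (\<Sum>k<n. cnj (v $ k) * (M $$ (k, i) * s + M $$ (k, j)))"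
    by (simp add: quadratic_form_sum[OF M v] Mv)
  also have "\<dots> = (\<Sum>k<n. (if k = i then cnj s * (M $$ (i, i) * s + M $$ (i, j)) else 0) +
                            (if k = j then M $$ (j, i) * s + M $$ (j, j) else 0))"
    using assms by (auto simp: v_def intro!: sum.cong)
  also have "\<dots> = cnj s * s * M $$ (i, i) + cnj s * M $$ (i, j) + M $$ (j, i) * s + M $$ (j, j)"
    using assms by (simp add: sum.distrib algebra_simps)
  finally show ?thesis
    using assms(1) v by (metis psd_def)
qed

lemma psd_diag_zero_imp_zero:
  assumes "psd n M" "i < n" "j < n" "M $$ (j, j) = 0"
  shows "M $$ (i, j) = 0" "M $$ (j, i) = 0"
proof -
  show "M $$ (i, j) = 0"
  proof (cases "i = j")
    case False
    define x where "x = M $$ (i, j)"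
    define d where "d = Re (M $$ (i, i))"
    define t :: real where "t = 1 / (\<bar>d\<bar> + 1)"
    have "t > 0" "t * d < 1"
      unfolding t_def by (simp_all add: field_simps)
    have "M $$ (j, i) = cnj x"
      using psd_hermitian[OF assms(1-3)] x_def by simp
    \<comment> \<open>the form at \<open>- t x e\<^sub>i + e\<^sub>j\<close> is \<open>t |x|\<^sup>2 (t d - 2)\<close>, negative unless \<open>x = 0\<close>\<close>
    then have "0 \<le> t * t * (Re x ^ 2 + Im x ^ 2) * d - 2 * t * (Re x ^ 2 + Im x ^ 2)"
      using psd_pair_form[OF assms(1-3) False, of "- of_real t * x"] assms(4)
      by (simp add: x_def d_def algebra_simps power2_eq_square)
    then have "0 \<le> t * (cmod x)\<^sup>2 * (t * d - 2)"
      by (simp add: cmod_power2 algebra_simps)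
    then have "t * (cmod x)\<^sup>2 \<le> 0"
      using \<open>t * d < 1\<close> by (auto simp: zero_le_mult_iff)
    then show ?thesis
      using \<open>t > 0\<close> by (simp add: x_def mult_le_0_iff)
  qed (use assms in simp)
  then show "M $$ (j, i) = 0"
    using psd_hermitian[OF assms(1-3)] by simp
qed

lemma index_conj_id_tensor:
  assumes "\<rho> \<in> carrier_mat (dA * dB) (dA * dB)" "i < dA * dB" "j < dA * dB"
  shows "(id_tensor dA dB K * \<rho> * adj (id_tensor dA dB K)) $$ (i, j) =
    (\<Sum>c<dB. \<Sum>c'<dB. K $$ (i mod dB, c) * \<rho> $$ (i div dB * dB + c, j div dB * dB + c') *
                       cnj (K $$ (j mod dB, c')))"
proof -
  let ?T = "id_tensor dA dB K" and ?n = "dA * dB"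
  let ?i0 = "i div dB * dB" and ?j0 = "j div dB * dB"
  have left: "(?T * \<rho>) $$ (i, l) = (\<Sum>c<dB. K $$ (i mod dB, c) * \<rho> $$ (?i0 + c, l))"
    if "l < ?n" for l
  proof -
    have "(?T * \<rho>) $$ (i, l) =
        (\<Sum>k<?n. if k div dB = i div dB then K $$ (i mod dB, k mod dB) * \<rho> $$ (k, l) else 0)"
      using assms that by (auto simp: id_tensor_def scalar_prod_def atLeast0LessThan intro!: sum.cong)
    also have "\<dots> = (\<Sum>c<dB. K $$ (i mod dB, (?i0 + c) mod dB) * \<rho> $$ (?i0 + c, l))"
      by (rule sum_same_block[OF assms(2)])
    also have "\<dots> = (\<Sum>c<dB. K $$ (i mod dB, c) * \<rho> $$ (?i0 + c, l))"
      by (intro sum.cong) auto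
    finally show ?thesis .
  qed
  have "(?T * \<rho> * adj ?T) $$ (i, j) =
      (\<Sum>l<?n. if l div dB = j div dB then (?T * \<rho>) $$ (i, l) * cnj (K $$ (j mod dB, l mod dB)) else 0)"
    using assms by (auto simp: id_tensor_def adj_def scalar_prod_def atLeast0LessThan intro!: sum.cong)
  also have "\<dots> = (\<Sum>c'<dB. (?T * \<rho>) $$ (i, ?j0 + c') * cnj (K $$ (j mod dB, (?j0 + c') mod dB)))"
    by (rule sum_same_block[OF assms(3)])
  also have "\<dots> =
      (\<Sum>c'<dB. (\<Sum>c<dB. K $$ (i mod dB, c) * \<rho> $$ (?i0 + c, ?j0 + c')) * cnj (K $$ (j mod dB, c')))"
  proof (intro sum.cong refl)
    fix c' assume "c' \<in> {..<dB}"
    then have "?j0 + c' < ?n"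
      using assms(3) by (simp add: block_index_less less_mult_imp_div_less)
    then show "(?T * \<rho>) $$ (i, ?j0 + c') * cnj (K $$ (j mod dB, (?j0 + c') mod dB)) =
        (\<Sum>c<dB. K $$ (i mod dB, c) * \<rho> $$ (?i0 + c, ?j0 + c')) * cnj (K $$ (j mod dB, c'))"
      using \<open>c' \<in> {..<dB}\<close> by (simp add: left)
  qed
  also have "\<dots> = (\<Sum>c'<dB. \<Sum>c<dB. K $$ (i mod dB, c) * \<rho> $$ (?i0 + c, ?j0 + c') *
                                    cnj (K $$ (j mod dB, c')))"
    by (simp add: sum_distrib_right)
  also have "\<dots> = (\<Sum>c<dB. \<Sum>c'<dB. K $$ (i mod dB, c) * \<rho> $$ (?i0 + c, ?j0 + c') *
                                    cnj (K $$ (j mod dB, c')))"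
    by (rule sum.swap)
  finally show ?thesis .
qed

lemma index_apply_B:
  assumes "\<rho> \<in> carrier_mat (dA * dB) (dA * dB)" "i < dA * dB" "j < dA * dB"
  shows "apply_B dA dB Ks \<rho> $$ (i, j) =
    (\<Sum>K\<leftarrow>Ks. \<Sum>c<dB. \<Sum>c'<dB. K $$ (i mod dB, c) * \<rho> $$ (i div dB * dB + c, j div dB * dB + c') *
                                cnj (K $$ (j mod dB, c')))"
proof -
  have "id_tensor dA dB K * \<rho> * adj (id_tensor dA dB K) \<in> carrier_mat (dA * dB) (dA * dB)" for K
    by (simp add: id_tensor_def adj_def carrier_matI)
  then show ?thesis
    unfolding apply_B_def using assms
    by (simp add: foldr_add_mat_carrier_index(2) index_conj_id_tensor)
qed

lemma kraus_B_index:
  assumes "kraus_B dB Ks" "c < dB" "c' < dB"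
  shows "(\<Sum>K\<leftarrow>Ks. \<Sum>b<dB. cnj (K $$ (b, c')) * K $$ (b, c)) = (if c' = c then 1 else 0)"
proof -
  have car: "K \<in> carrier_mat dB dB" if "K \<in> set Ks" for K
    using assms(1)[unfolded kraus_B_def, THEN conjunct1] that by blast
  then have "adj K * K \<in> carrier_mat dB dB" if "K \<in> set Ks" for K
    using that by (blast intro: mult_carrier_mat adj_carrier_mat)
  then have "foldr (\<lambda>K S. adj K * K + S) Ks (0\<^sub>m dB dB) $$ (c', c) = (\<Sum>K\<leftarrow>Ks. (adj K * K) $$ (c', c))"
    using assms(3,2) by (rule foldr_add_mat_carrier_index(2))
  moreover have "foldr (\<lambda>K S. adj K * K + S) Ks (0\<^sub>m dB dB) = 1\<^sub>m dB"
    using assms(1)[unfolded kraus_B_def, THEN conjunct2] .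
  ultimately have "(\<Sum>K\<leftarrow>Ks. (adj K * K) $$ (c', c)) = 1\<^sub>m dB $$ (c', c)"
    by simp
  moreover have "(adj K * K) $$ (c', c) = (\<Sum>b<dB. cnj (K $$ (b, c')) * K $$ (b, c))" if "K \<in> set Ks" for K
    using car[OF that] assms by (auto simp: adj_def scalar_prod_def atLeast0LessThan intro!: sum.cong)
  ultimately show ?thesis
    using assms by (simp cong: map_cong)
qed

lemma ptrace_B_apply_B:
  assumes "kraus_B dB Ks" "\<rho> \<in> carrier_mat (dA * dB) (dA * dB)"
  shows "ptrace_B dA dB (apply_B dA dB Ks \<rho>) = ptrace_B dA dB \<rho>"
proof (rule eq_matI)
  fix a a' assume "a < dim_row (ptrace_B dA dB \<rho>)" "a' < dim_col (ptrace_B dA dB \<rho>)"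
  then have a: "a < dA" "a' < dA" by (auto simp: ptrace_B_def)
  let ?r = "\<lambda>c c'. \<rho> $$ (a * dB + c, a' * dB + c')"
  have "ptrace_B dA dB (apply_B dA dB Ks \<rho>) $$ (a, a') =
      (\<Sum>b<dB. \<Sum>K\<leftarrow>Ks. \<Sum>c<dB. \<Sum>c'<dB. K $$ (b, c) * ?r c c' * cnj (K $$ (b, c')))"
    using a assms(2) by (auto simp: ptrace_B_def index_apply_B block_index_less intro!: sum.cong)
  also have "\<dots> = (\<Sum>b<dB. \<Sum>c<dB. \<Sum>c'<dB. \<Sum>K\<leftarrow>Ks. ?r c c' * (cnj (K $$ (b, c')) * K $$ (b, c)))"
    by (simp only: sum_list_sum_swap ac_simps)
  also have "\<dots> = (\<Sum>c<dB. \<Sum>c'<dB. \<Sum>b<dB. \<Sum>K\<leftarrow>Ks. ?r c c' * (cnj (K $$ (b, c')) * K $$ (b, c)))"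
    by (rule sum_rotate)
  also have "\<dots> = (\<Sum>c<dB. \<Sum>c'<dB. ?r c c' * (\<Sum>K\<leftarrow>Ks. \<Sum>b<dB. cnj (K $$ (b, c')) * K $$ (b, c)))"
    by (simp add: sum_list_sum_swap sum_distrib_left sum_list_const_mult)
  also have "\<dots> = (\<Sum>c<dB. ?r c c)"
    using assms(1) by (simp add: kraus_B_index if_distrib[of "(*) _"] cong: if_cong)
  also have "\<dots> = ptrace_B dA dB \<rho> $$ (a, a')"
    using a by (simp add: ptrace_B_def)
  finally show "ptrace_B dA dB (apply_B dA dB Ks \<rho>) $$ (a, a') = ptrace_B dA dB \<rho> $$ (a, a')" .
qed (simp_all add: ptrace_B_def)

lemma N_B_subset_ST_B: "N_B dA dB P \<subseteq> ST_B dA dB P"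
proof
  fix \<rho> assume "\<rho> \<in> N_B dA dB P"
  then obtain \<sigma> Ks where "density (dA * dB) \<rho>" "state_in (dA * dB) P \<sigma>" "kraus_B dB Ks"
      "\<rho> = apply_B dA dB Ks \<sigma>"
    by (auto simp: N_B_def)
  moreover have "\<sigma> \<in> carrier_mat (dA * dB) (dA * dB)"
    using \<open>state_in (dA * dB) P \<sigma>\<close> by (simp add: state_in_def density_def psd_def)
  ultimately show "\<rho> \<in> ST_B dA dB P"
    by (auto simp: ST_B_def ptrace_B_apply_B)
qed

definition proj_ket0_B :: "nat \<Rightarrow> nat \<Rightarrow> complex mat" where
  "proj_ket0_B dA dB = mat (dA * dB) (dA * dB) (\<lambda>(i, j). if i = j \<and> i mod dB = 0 then 1 else 0)"

lemma projector_proj_ket0_B: "projector (dA * dB) (proj_ket0_B dA dB)"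
  unfolding projector_def
  by (auto simp: proj_ket0_B_def adj_def scalar_prod_def if_distrib[of "\<lambda>x. x * _"] cong: if_cong
      intro!: eq_matI) (auto intro!: sum.neutral)

lemma state_in_proj_ket0_B_index:
  assumes "state_in (dA * dB) (proj_ket0_B dA dB) \<sigma>" "i < dA * dB" "j < dA * dB"
    and "i mod dB \<noteq> 0 \<or> j mod dB \<noteq> 0"
  shows "\<sigma> $$ (i, j) = 0"
proof -
  let ?n = "dA * dB"
  have psd_\<sigma>: "psd ?n \<sigma>" and "mtrace \<sigma> = 1" "mtrace (proj_ket0_B dA dB * \<sigma>) = 1"
    using assms(1) by (auto simp: state_in_def density_def)
  have \<sigma>: "\<sigma> \<in> carrier_mat ?n ?n"
    using psd_\<sigma> by (simp add: psd_def)
  have "mtrace \<sigma> =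
      (\<Sum>k<?n. if k mod dB = 0 then \<sigma> $$ (k, k) else 0) + (\<Sum>k<?n. if k mod dB = 0 then 0 else \<sigma> $$ (k, k))"
    using \<sigma> by (simp add: mtrace_def sum.distrib[symmetric] if_distrib cong: if_cong)
  moreover have "mtrace (proj_ket0_B dA dB * \<sigma>) = (\<Sum>k<?n. if k mod dB = 0 then \<sigma> $$ (k, k) else 0)"
    using \<sigma> by (auto simp: mtrace_def proj_ket0_B_def scalar_prod_def if_distrib[of "\<lambda>x. x * _"]
        cong: if_cong intro!: sum.cong)
  ultimately have "(\<Sum>k<?n. if k mod dB = 0 then 0 else \<sigma> $$ (k, k)) = 0"
    using \<open>mtrace \<sigma> = 1\<close> \<open>mtrace (proj_ket0_B dA dB * \<sigma>) = 1\<close> by simp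
  moreover have "0 \<le> (if k mod dB = 0 then 0 else \<sigma> $$ (k, k))" if "k \<in> {..<?n}" for k
    using psd_diag_nonneg[OF psd_\<sigma>] that by simp
  ultimately have diag_outside: "\<forall>k\<in>{..<?n}. (if k mod dB = 0 then 0 else \<sigma> $$ (k, k)) = 0"
    using sum_nonneg_eq_0_iff[of "{..<?n}" "\<lambda>k. if k mod dB = 0 then 0 else \<sigma> $$ (k, k)"] by blast
  have diag: "\<sigma> $$ (k, k) = 0" if "k < ?n" "k mod dB \<noteq> 0" for k
    using diag_outside[rule_format, of k] that by simp
  show ?thesis
  proof (cases "j mod dB = 0")
    case True
    then have "\<sigma> $$ (i, i) = 0"
      using assms(2,4) diag by simp
    then show ?thesis
      using psd_diag_zero_imp_zero(2)[OF psd_\<sigma> assms(3,2)] by simp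
  next
    case False
    then show ?thesis
      using psd_diag_zero_imp_zero(1)[OF psd_\<sigma> assms(2,3)] diag assms(3) by simp
  qed
qed

lemma apply_B_proj_ket0_B_index:
  assumes "state_in (dA * dB) (proj_ket0_B dA dB) \<sigma>" "i < dA * dB" "j < dA * dB"
  shows "apply_B dA dB Ks \<sigma> $$ (i, j) =
    \<sigma> $$ (i div dB * dB, j div dB * dB) * (\<Sum>K\<leftarrow>Ks. K $$ (i mod dB, 0) * cnj (K $$ (j mod dB, 0)))"
proof -
  let ?i0 = "i div dB * dB" and ?j0 = "j div dB * dB"
  have \<sigma>: "\<sigma> \<in> carrier_mat (dA * dB) (dA * dB)"
    using assms(1) by (simp add: state_in_def density_def psd_def)
  have "0 < dB" "i div dB < dA" "j div dB < dA"
    using assms(2,3) by (auto simp: less_mult_imp_div_less intro: gr0I)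
  have collapse: "(\<Sum>c<dB. \<Sum>c'<dB. K $$ (i mod dB, c) * \<sigma> $$ (?i0 + c, ?j0 + c') * cnj (K $$ (j mod dB, c')))
      = K $$ (i mod dB, 0) * \<sigma> $$ (?i0, ?j0) * cnj (K $$ (j mod dB, 0))" for K
  proof -
    have entry: "\<sigma> $$ (?i0 + c, ?j0 + c') = (if c' = 0 then if c = 0 then \<sigma> $$ (?i0, ?j0) else 0 else 0)"
      if "c < dB" "c' < dB" for c c'
      using state_in_proj_ket0_B_index[OF assms(1), of "?i0 + c" "?j0 + c'"] that
        \<open>i div dB < dA\<close> \<open>j div dB < dA\<close>
      by (cases "c = 0"; cases "c' = 0") (simp_all add: block_index_less)
    have "(\<Sum>c<dB. \<Sum>c'<dB. K $$ (i mod dB, c) * \<sigma> $$ (?i0 + c, ?j0 + c') * cnj (K $$ (j mod dB, c'))) =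
        (\<Sum>c<dB. \<Sum>c'<dB. K $$ (i mod dB, c) *
           (if c' = 0 then if c = 0 then \<sigma> $$ (?i0, ?j0) else 0 else 0) * cnj (K $$ (j mod dB, c')))"
      by (intro sum.cong refl) (simp add: entry)
    then show ?thesis
      using \<open>0 < dB\<close> by (simp add: if_distrib[of "(*) _"] if_distrib[of "\<lambda>x. x * _"] cong: if_cong)
  qed
  have "apply_B dA dB Ks \<sigma> $$ (i, j) = (\<Sum>K\<leftarrow>Ks. K $$ (i mod dB, 0) * \<sigma> $$ (?i0, ?j0) * cnj (K $$ (j mod dB, 0)))"
    using assms(2,3) \<sigma> by (simp add: index_apply_B collapse)
  then show ?thesis
    by (simp add: sum_list_const_mult[symmetric] ac_simps)
qed

lemma N_B_proj_ket0_B_diag_product: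
  assumes "\<rho> \<in> N_B dA dB (proj_ket0_B dA dB)" "a < dA" "a' < dA" "b < dB" "b' < dB"
  shows "\<rho> $$ (a * dB + b, a * dB + b) * \<rho> $$ (a' * dB + b', a' * dB + b') =
         \<rho> $$ (a * dB + b', a * dB + b') * \<rho> $$ (a' * dB + b, a' * dB + b)"
proof -
  obtain \<sigma> Ks where \<sigma>: "state_in (dA * dB) (proj_ket0_B dA dB) \<sigma>" and \<rho>: "\<rho> = apply_B dA dB Ks \<sigma>"
    using assms(1) by (auto simp: N_B_def)
  let ?\<tau> = "\<lambda>b. \<Sum>K\<leftarrow>Ks. K $$ (b, 0) * cnj (K $$ (b, 0))"
  have "\<rho> $$ (x * dB + y, x * dB + y) = \<sigma> $$ (x * dB, x * dB) * ?\<tau> y" if "x < dA" "y < dB" for x y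
    using apply_B_proj_ket0_B_index[OF \<sigma>, of "x * dB + y" "x * dB + y" Ks] that
    by (simp add: \<rho> block_index_less)
  then show ?thesis
    using assms(2-5) by simp
qed

definition bell_state :: "complex mat" where
  "bell_state = mat 4 4 (\<lambda>(i, j). if i \<in> {0, 3} \<and> j \<in> {0, 3} then 1 / 2 else 0)"

definition mixed_ket0 :: "complex mat" where
  "mixed_ket0 = mat 4 4 (\<lambda>(i, j). if i = j \<and> even i then 1 / 2 else 0)"

lemma density_bell_state: "density (2 * 2) bell_state"
proof -
  have B: "bell_state \<in> carrier_mat 4 4"
    by (simp add: bell_state_def)
  have "psd 4 bell_state"
    unfolding psd_def
  proof (intro conjI allI impI B)
    show "adj bell_state = bell_state"
      by (rule eq_matI) (auto simp: bell_state_def adj_def)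
    fix v :: "complex vec" assume v: "dim_vec v = 4"
    have q: "conjugate v \<bullet> (bell_state *\<^sub>v v) = (v $ 0 + v $ 3) * cnj (v $ 0 + v $ 3) / 2"
      unfolding quadratic_form_sum[OF B v] by (simp add: lessThan_nat_numeral bell_state_def algebra_simps)
    show "0 \<le> Re (conjugate v \<bullet> (bell_state *\<^sub>v v))"
      unfolding q complex_mult_cnj by simp
  qed
  moreover have "mtrace bell_state = 1"
    by (simp add: mtrace_def lessThan_nat_numeral bell_state_def)
  ultimately show ?thesis
    by (simp add: density_def)
qed

lemma state_in_mixed_ket0: "state_in (2 * 2) (proj_ket0_B 2 2) mixed_ket0"
proof -
  have R: "mixed_ket0 \<in> carrier_mat 4 4"
    by (simp add: mixed_ket0_def)
  have "psd 4 mixed_ket0"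
    unfolding psd_def
  proof (intro conjI allI impI R)
    show "adj mixed_ket0 = mixed_ket0"
      by (rule eq_matI) (auto simp: mixed_ket0_def adj_def)
    fix v :: "complex vec" assume v: "dim_vec v = 4"
    have q: "conjugate v \<bullet> (mixed_ket0 *\<^sub>v v) = (v $ 0 * cnj (v $ 0) + v $ 2 * cnj (v $ 2)) / 2"
      unfolding quadratic_form_sum[OF R v]
      by (simp add: lessThan_nat_numeral mixed_ket0_def algebra_simps add_divide_distrib)
    show "0 \<le> Re (conjugate v \<bullet> (mixed_ket0 *\<^sub>v v))"
      unfolding q complex_mult_cnj by simp
  qed
  moreover have "mtrace mixed_ket0 = 1" "mtrace (proj_ket0_B 2 2 * mixed_ket0) = 1"
    by (simp_all add: mtrace_def proj_ket0_B_def mixed_ket0_def scalar_prod_def lessThan_nat_numeral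
        atLeast0LessThan)
  ultimately show ?thesis
    by (simp add: state_in_def density_def)
qed

lemma ptrace_B_bell_state: "ptrace_B 2 2 bell_state = ptrace_B 2 2 mixed_ket0"
  by (intro eq_matI) (auto simp: ptrace_B_def bell_state_def mixed_ket0_def lessThan_nat_numeral)

lemma bell_state_in_ST_B: "bell_state \<in> ST_B 2 2 (proj_ket0_B 2 2)"
  using density_bell_state state_in_mixed_ket0 ptrace_B_bell_state by (auto simp: ST_B_def)

lemma bell_state_notin_N_B: "bell_state \<notin> N_B 2 2 (proj_ket0_B 2 2)"
proof
  assume "bell_state \<in> N_B 2 2 (proj_ket0_B 2 2)"
  \<comment> \<open>here \<open>\<rho>\<^sub>0\<^sub>0 \<rho>\<^sub>3\<^sub>3 = 1/4\<close> but \<open>\<rho>\<^sub>1\<^sub>1 \<rho>\<^sub>2\<^sub>2 = 0\<close>\<close>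
  from N_B_proj_ket0_B_diag_product[OF this, of 0 1 0 1] show False
    by (simp add: bell_state_def)
qed

theorem mainTheorem9:
  shows "\<exists>(dA::nat) (dB::nat) P. projector (dA * dB) P \<and> N_B dA dB P \<subset> ST_B dA dB P"
proof (intro exI conjI)
  show "projector (2 * 2) (proj_ket0_B 2 2)"
    by (rule projector_proj_ket0_B)
  show "N_B 2 2 (proj_ket0_B 2 2) \<subset> ST_B 2 2 (proj_ket0_B 2 2)"
    using N_B_subset_ST_B bell_state_in_ST_B bell_state_notin_N_B by blast
qed

end
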